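(* Let $\{w_k\}$ be generated by the inexact subsampled Newton-CG method $w_{k+1}=w_k+p_k^r$, where $|S_k|=\beta$ for all $k$ and $p_k^r$ is the result of $r<d$ iterations of the conjugate gradient method, started from $p^0=0$, applied to the linear system $\nabla^2R_{S_k}(w_k)p=-\nabla R(w_k)$. Suppose Assumptions A1, A3 and A4 hold (for $R$). Then $$\mathbb{E}_k[\|w_{k+1}-w^*\|]\le C_1\|w_k-w^*\|^2+\left(\frac{C_2}{\sqrt\beta}+C_3\theta^r\right)\|w_k-w^*\|,$$ where $$C_1=\frac{M}{2\mu_\beta},\quad C_2=\frac{\sigma}{\mu_\beta},\quad C_3=\frac{2L}{\mu_\beta}\sqrt{\delta(\beta)},\quad \theta=\frac{\sqrt{\delta(\beta)}-1}{\sqrt{\delta(\beta)}+1},\quad \delta(\beta)=\frac{L_\beta}{\mu_\beta}.$$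
   Context: Setting (finite sum): $R(w)=\frac1N\sum_{i=1}^NF_i(w)$ for $w\in\mathbb{R}^d$, with each $F_i$ twice continuously differentiable. For an index multiset $S\subset\{1,\dots,N\}$, $\nabla^2R_S(w)=\frac1{|S|}\sum_{i\in S}\nabla^2F_i(w)$. At each iteration $S_k$ consists of $\beta$ indices drawn independently and uniformly from $\{1,\dots,N\}$, independent of the past; the full gradient $\nabla R(w_k)$ is used. $\mathbb{E}_k$ is expectation over $S_k$ conditional on $w_k$. $w^*$ is the unique minimizer of $R$. Assumption A1 (for $R$): for every positive integer $\beta$ there are $0<\mu_\beta\le L_\beta$ with $\mu_\beta I\preceq\nabla^2R_S(w)\preceq L_\beta I$ for all $w$ and all $|S|=\beta$; constants $0<\bar\mu\le\mu_\beta$, $L_\beta\le\bar L<\infty$ for all $\beta$; and $\mu I\preceq\nabla^2R(w)\preceq LI$ for all $w$. Assumption A3: $\|\nabla^2R(w)-\nabla^2R(z)\|\le M\|w-z\|$ for all $w,z$. Assumption A4: with $i$ uniform on $\{1,\dots,N\}$, $\|\mathbb{E}[(\nabla^2F_i(w)-\nabla^2R(w))^2]\|\le\sigma^2$ for all $w$. *)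

theory Defs
  imports "HOL-Analysis.Analysis"
begin

definition mnorm :: "real^'n^'n \<Rightarrow> real" where
  "mnorm A = onorm (\<lambda>x. A *v x)"

definition loewner_le :: "real^'n^'n \<Rightarrow> real^'n^'n \<Rightarrow> bool" where
  "loewner_le A B \<longleftrightarrow> (\<forall>x. x \<bullet> (A *v x) \<le> x \<bullet> (B *v x))"

text \<open>Index samples of size beta drawn (with replacement, ordered) from {0..<N};
  uniform iid sampling corresponds to the uniform distribution on this set.\<close>
definition samples :: "nat \<Rightarrow> nat \<Rightarrow> nat list set" where
  "samples N \<beta> = {S. length S = \<beta> \<and> set S \<subseteq> {..<N}}"

definition sample_exp :: "nat \<Rightarrow> nat \<Rightarrow> (nat list \<Rightarrow> real) \<Rightarrow> real" where
  "sample_exp N \<beta> X = (\<Sum>S\<in>samples N \<beta>. X S) / real N ^ \<beta>"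

definition sub_hess :: "(nat \<Rightarrow> real^'n \<Rightarrow> real^'n^'n) \<Rightarrow> nat list \<Rightarrow> real^'n \<Rightarrow> real^'n^'n" where
  "sub_hess H S w = (1 / real (length S)) *\<^sub>R sum_list (map (\<lambda>i. H i w) S)"

text \<open>Conjugate gradient for A p = b started from p0 = 0.
  State: (iterate x_k, residual r_k = b - A x_k, search direction d_k).\<close>
fun cg_state :: "real^'n^'n \<Rightarrow> real^'n \<Rightarrow> nat \<Rightarrow> (real^'n) \<times> (real^'n) \<times> (real^'n)" where
  "cg_state A b 0 = (0, b, b)"
| "cg_state A b (Suc k) =
     (let (x, r, d) = cg_state A b k;
          \<alpha> = (r \<bullet> r) / (d \<bullet> (A *v d));
          x' = x + \<alpha> *\<^sub>R d;
          r' = r - \<alpha> *\<^sub>R (A *v d);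
          \<gamma> = (r' \<bullet> r') / (r \<bullet> r);
          d' = r' + \<gamma> *\<^sub>R d
      in (x', r', d'))"

definition cg :: "real^'n^'n \<Rightarrow> real^'n \<Rightarrow> nat \<Rightarrow> real^'n" where
  "cg A b k = fst (cg_state A b k)"

end

theory Submission
  imports Defs "HOL-Computational_Algebra.Polynomial"
begin

text \<open>
  Write \<open>e = w - w\<^sup>*\<close>, \<open>A = \<nabla>\<^sup>2R\<^sub>S(w)\<close> and let \<open>p\<^sup>*\<close> solve \<open>A p\<^sup>* = -\<nabla>R(w)\<close>. Then
  \<open>A (e + p\<^sup>*) = (A - \<nabla>\<^sup>2R(w)) e - (\<nabla>R(w) - \<nabla>\<^sup>2R(w) e)\<close>; the second term is a Taylor
  remainder of size \<open>M/2 \<parallel>e\<parallel>\<^sup>2\<close> (Lipschitz Hessian), and the first has mean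
  \<open>\<le> \<sigma>\<parallel>e\<parallel>/\<surd>\<beta>\<close> because it is an average of \<open>\<beta>\<close> independent centred terms.
  Dividing by \<open>\<mu>\<^sub>\<beta>\<close> bounds the exact Newton step. The \<open>r\<close>-step CG iterate is optimal in
  the \<open>A\<close>-norm over the Krylov space, so comparing it with a rescaled Chebyshev polynomial
  gives \<open>\<parallel>p\<^sup>r - p\<^sup>*\<parallel> \<le> 2\<surd>\<delta> \<theta>\<^sup>r \<parallel>p\<^sup>*\<parallel>\<close>, and \<open>\<parallel>p\<^sup>*\<parallel> \<le> L\<parallel>e\<parallel>/\<mu>\<^sub>\<beta>\<close>.
  The CG bound holds for every \<open>r\<close>.
\<close>

section \<open>Symmetric positive definite matrices\<close>

definition symm :: "real^'n^'n \<Rightarrow> bool" where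
  "symm A \<longleftrightarrow> (\<forall>x y. x \<bullet> (A *v y) = (A *v x) \<bullet> y)"

lemma symm_add: "symm A \<Longrightarrow> symm B \<Longrightarrow> symm (A + B)"
  by (simp add: symm_def matrix_vector_mult_add_rdistrib inner_add_left inner_add_right)

lemma symm_diff: "symm A \<Longrightarrow> symm B \<Longrightarrow> symm (A - B)"
  by (simp add: symm_def matrix_vector_mult_diff_rdistrib inner_diff_left inner_diff_right)

lemma symm_scaleR: "symm A \<Longrightarrow> symm (c *\<^sub>R A)"
  by (simp add: symm_def scaleR_matrix_vector_assoc[symmetric])

lemma symm_zero: "symm 0"
  by (simp add: symm_def)

lemma symm_sum: "(\<And>i. i \<in> I \<Longrightarrow> symm (M i)) \<Longrightarrow> symm (\<Sum>i\<in>I. M i)"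
  by (induction I rule: infinite_finite_induct) (simp_all add: symm_zero symm_add)

lemma symm_sum_list: "(\<And>i. i \<in> set S \<Longrightarrow> symm (M i)) \<Longrightarrow> symm (sum_list (map M S))"
  by (induction S) (simp_all add: symm_zero symm_add)

lemma matrix_vector_mult_sum: "(\<Sum>i\<in>I. M i) *v x = (\<Sum>i\<in>I. M i *v (x::real^'n))"
  by (induction I rule: infinite_finite_induct) (simp_all add: matrix_vector_mult_add_rdistrib)

lemma matrix_vector_mult_sum_list:
  "sum_list (map M S) *v x = sum_list (map (\<lambda>i. M i *v (x::real^'n)) S)"
  by (induction S) (simp_all add: matrix_vector_mult_add_rdistrib)

lemma sum_list_map_const_scaleR: "sum_list (map (\<lambda>i. X) S) = real (length S) *\<^sub>R (X::real^'n^'n)"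
  by (induction S) (simp_all add: scaleR_add_left)

lemma matrix_vector_mult_scaled_id: "(m *\<^sub>R mat 1) *v x = m *\<^sub>R (x::real^'n)"
  by (simp add: scaleR_matrix_vector_assoc[symmetric])

lemma loewner_le_scaled_id_left: "loewner_le (m *\<^sub>R mat 1) A \<Longrightarrow> m * (x \<bullet> x) \<le> x \<bullet> (A *v x)"
  by (simp add: loewner_le_def matrix_vector_mult_scaled_id)

lemma loewner_le_scaled_id_right: "loewner_le A (m *\<^sub>R mat 1) \<Longrightarrow> x \<bullet> (A *v x) \<le> m * (x \<bullet> x)"
  by (simp add: loewner_le_def matrix_vector_mult_scaled_id)

lemma mnorm_bound: "norm (A *v x) \<le> mnorm A * norm x"
  unfolding mnorm_def by (rule onorm) simp

lemma quadratic_nonneg_discriminant: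
  fixes a b c :: real
  assumes c: "0 \<le> c" and q: "\<And>t. 0 \<le> a + 2*t*b + t^2*c"
  shows "b^2 \<le> a*c"
proof (cases "c = 0")
  case True
  have "b = 0"
  proof (rule ccontr)
    assume "b \<noteq> 0"
    have "0 \<le> a + 2*(-(a+1)/(2*b))*b" using q[of "-(a+1)/(2*b)"] True by simp
    also have "\<dots> = -1" using \<open>b \<noteq> 0\<close> by (simp add: field_simps)
    finally show False by simp
  qed
  thus ?thesis using True by simp
next
  case False
  hence c_pos: "c > 0" using c by simp
  have "0 \<le> a + 2*(-b/c)*b + (-b/c)^2*c" by (rule q)
  also have "\<dots> = a - b^2/c" using c_pos by (simp add: field_simps power2_eq_square)
  finally show ?thesis using c_pos by (simp add: field_simps)
qed

lemma psd_upper_bound_nonneg: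
  fixes A :: "real^'n^'n"
  assumes nonneg: "\<And>x. 0 \<le> x \<bullet> (A *v x)" and upper: "\<And>x. x \<bullet> (A *v x) \<le> L * (x \<bullet> x)"
  shows "0 \<le> L"
proof -
  have "0 < (1::real^'n) \<bullet> 1" by simp
  moreover have "0 \<le> L * ((1::real^'n) \<bullet> 1)" using nonneg[of 1] upper[of 1] by linarith
  ultimately show ?thesis by (meson not_le mult_neg_pos)
qed

lemma psd_norm_matrix_vector_mult_le:
  fixes A :: "real^'n^'n"
  assumes sym: "symm A" and nonneg: "\<And>x. 0 \<le> x \<bullet> (A *v x)"
    and upper: "\<And>x. x \<bullet> (A *v x) \<le> L * (x \<bullet> x)"
  shows "norm (A *v x) \<le> L * norm x"
proof -
  have L: "0 \<le> L" by (rule psd_upper_bound_nonneg[OF nonneg upper])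
  define y where "y = A *v x"
  have symA: "u \<bullet> (A *v v) = (A *v u) \<bullet> v" for u v using sym by (simp add: symm_def)
  have xAy: "x \<bullet> (A *v y) = y \<bullet> y" unfolding y_def by (rule symA)
  \<comment> \<open>Cauchy-Schwarz for the semi-inner product \<open>\<langle>u, v\<rangle> = u \<bullet> A v\<close>\<close>
  have "(x \<bullet> (A *v y))^2 \<le> (x \<bullet> (A *v x)) * (y \<bullet> (A *v y))"
  proof (rule quadratic_nonneg_discriminant[OF nonneg])
    fix t :: real
    have "(x + t *\<^sub>R y) \<bullet> (A *v (x + t *\<^sub>R y))
        = x \<bullet> (A *v x) + t * (x \<bullet> (A *v y)) + t * (y \<bullet> (A *v x)) + t^2 * (y \<bullet> (A *v y))"
      by (simp add: matrix_vector_right_distrib matrix_vector_mult_scaleR inner_add_left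
          inner_add_right power2_eq_square distrib_left)
    moreover have "y \<bullet> (A *v x) = x \<bullet> (A *v y)"
      using symA[of y x] by (simp add: inner_commute)
    ultimately show "0 \<le> x \<bullet> (A *v x) + 2 * t * (x \<bullet> (A *v y)) + t^2 * (y \<bullet> (A *v y))"
      using nonneg[of "x + t *\<^sub>R y"] by simp
  qed
  also have "\<dots> \<le> (L * (x \<bullet> x)) * (L * (y \<bullet> y))"
    by (rule mult_mono[OF upper upper _ nonneg]) (use nonneg[of x] upper[of x] in linarith)
  finally have "(y \<bullet> y) * (y \<bullet> y) \<le> (L^2 * (x \<bullet> x)) * (y \<bullet> y)"
    by (simp only: xAy power2_eq_square mult_ac)
  hence "y \<bullet> y \<le> L^2 * (x \<bullet> x)"
    by (cases "y = 0") (simp_all add: mult_le_cancel_right_pos)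
  hence "(norm y)^2 \<le> (L * norm x)^2" by (simp add: dot_square_norm power_mult_distrib)
  from power2_le_imp_le[OF this] show ?thesis using L by (simp add: y_def)
qed

lemma coercive_matrix_vector_mult_ge:
  fixes A :: "real^'n^'n"
  assumes lower: "\<And>x. m * (x \<bullet> x) \<le> x \<bullet> (A *v x)" and m: "0 < m"
  shows "m * norm x \<le> norm (A *v x)"
proof (cases "x = 0")
  case False
  have "m * (norm x)^2 \<le> x \<bullet> (A *v x)" using lower[of x] by (simp add: dot_square_norm)
  also have "\<dots> \<le> norm x * norm (A *v x)" by (rule norm_cauchy_schwarz)
  finally have "norm x * (m * norm x) \<le> norm x * norm (A *v x)"
    by (simp add: power2_eq_square algebra_simps)
  thus ?thesis using False by simp
qed simp

lemma coercive_matrix_surj: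
  fixes A :: "real^'n^'n"
  assumes lower: "\<And>x. m * (x \<bullet> x) \<le> x \<bullet> (A *v x)" and m: "0 < m"
  shows "\<exists>p. A *v p = c"
proof -
  have "inj ((*v) A)"
  proof (rule injI)
    fix x y assume "A *v x = A *v y"
    hence "A *v (x - y) = 0" by (simp add: matrix_vector_mult_diff_distrib)
    thus "x = y" using coercive_matrix_vector_mult_ge[OF lower m, of "x - y"] m
      by (simp add: mult_le_0_iff)
  qed
  hence "surj ((*v) A)" by (intro linear_inj_imp_surj) simp_all
  thus ?thesis unfolding surj_def by metis
qed

section \<open>Conjugate gradients\<close>

definition krylov :: "real^'n^'n \<Rightarrow> real^'n \<Rightarrow> nat \<Rightarrow> (real^'n) set" where
  "krylov A c k = span ((\<lambda>j. ((*v) A ^^ j) c) ` {..<k})"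

lemma subspace_krylov [simp]: "subspace (krylov A c k)"
  by (simp add: krylov_def)

lemma krylov_0 [simp]: "krylov A c 0 = {0}"
  by (simp add: krylov_def)

lemma krylov_mono: "k \<le> m \<Longrightarrow> krylov A c k \<subseteq> krylov A c m"
  unfolding krylov_def by (intro span_mono image_mono) auto

lemma krylov_subset_Suc: "krylov A c k \<subseteq> krylov A c (Suc k)"
  by (rule krylov_mono) simp

lemma in_krylov_Suc: "c \<in> krylov A c (Suc k)"
  unfolding krylov_def by (rule span_base) (auto simp: image_iff intro!: bexI[where x=0])

lemma matrix_vector_mult_in_krylov_Suc:
  assumes "y \<in> krylov A c k" shows "A *v y \<in> krylov A c (Suc k)"
proof -
  have "(*v) A ` krylov A c k = span ((*v) A ` ((\<lambda>j. ((*v) A ^^ j) c) ` {..<k}))"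
    unfolding krylov_def by (rule span_linear_image[OF matrix_vector_mul_linear, symmetric])
  also have "\<dots> \<subseteq> krylov A c (Suc k)"
    unfolding krylov_def by (intro span_mono) (auto simp: image_iff intro!: bexI[where x="Suc _"])
  finally show ?thesis using assms by auto
qed

lemma krylov_Suc_decompose:
  assumes d: "d \<in> krylov A c (Suc k)" "d \<notin> krylov A c k" and y: "y \<in> krylov A c (Suc k)"
  obtains t z where "z \<in> krylov A c k" "y = t *\<^sub>R d + z"
proof -
  let ?u = "((*v) A ^^ k) c"
  have Suc_eq: "krylov A c (Suc k) = span (insert ?u ((\<lambda>j. ((*v) A ^^ j) c) ` {..<k}))"
    unfolding krylov_def lessThan_Suc by simp
  have "d \<in> span (insert ?u ((\<lambda>j. ((*v) A ^^ j) c) ` {..<k}))" using d(1) Suc_eq by simp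
  then obtain s where s: "d - s *\<^sub>R ?u \<in> krylov A c k"
    unfolding span_insert krylov_def by auto
  have "s \<noteq> 0" using s d(2) by auto
  have "y \<in> span (insert ?u ((\<lambda>j. ((*v) A ^^ j) c) ` {..<k}))" using y Suc_eq by simp
  then obtain s' where s': "y - s' *\<^sub>R ?u \<in> krylov A c k"
    unfolding span_insert krylov_def by auto
  define z where "z = (y - s' *\<^sub>R ?u) - (s'/s) *\<^sub>R (d - s *\<^sub>R ?u)"
  have "z \<in> krylov A c k"
    unfolding z_def
    by (rule subspace_diff[OF subspace_krylov s' subspace_scale[OF subspace_krylov s]])
  moreover have "y = (s'/s) *\<^sub>R d + z" using \<open>s \<noteq> 0\<close> by (simp add: z_def algebra_simps)
  ultimately show ?thesis by (rule that)
qed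

lemma cg_state_invariant:
  fixes A :: "real^'n^'n"
  assumes sym: "symm A" and pd: "\<And>x. x \<noteq> 0 \<Longrightarrow> 0 < x \<bullet> (A *v x)"
  shows "\<exists>x rr d. cg_state A c k = (x, rr, d) \<and> rr = c - A *v x \<and> x \<in> krylov A c k
     \<and> rr \<in> krylov A c (Suc k) \<and> d \<in> krylov A c (Suc k)
     \<and> (\<forall>y\<in>krylov A c k. rr \<bullet> y = 0 \<and> d \<bullet> (A *v y) = 0) \<and> rr \<bullet> d = rr \<bullet> rr"
proof (induction k)
  case 0 show ?case by (auto intro: in_krylov_Suc)
next
  case (Suc k)
  then obtain x rr d where st: "cg_state A c k = (x,rr,d)" and res: "rr = c - A *v x"
    and x_kr: "x \<in> krylov A c k" and r_kr: "rr \<in> krylov A c (Suc k)"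
    and d_kr: "d \<in> krylov A c (Suc k)"
    and orth: "\<forall>y\<in>krylov A c k. rr \<bullet> y = 0 \<and> d \<bullet> (A *v y) = 0" and rd: "rr \<bullet> d = rr \<bullet> rr"
    by blast
  define \<alpha> where "\<alpha> = (rr \<bullet> rr) / (d \<bullet> (A *v d))"
  define x' where "x' = x + \<alpha> *\<^sub>R d"
  define r' where "r' = rr - \<alpha> *\<^sub>R (A *v d)"
  define \<gamma> where "\<gamma> = (r' \<bullet> r') / (rr \<bullet> rr)"
  define d' where "d' = r' + \<gamma> *\<^sub>R d"
  have st': "cg_state A c (Suc k) = (x', r', d')" using st
    by (simp add: \<alpha>_def x'_def r'_def \<gamma>_def d'_def Let_def)
  have symA: "\<And>u v. u \<bullet> (A *v v) = (A *v u) \<bullet> v" using sym by (simp add: symm_def)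
  have kr_Suc: "krylov A c k \<subseteq> krylov A c (Suc k)" "krylov A c (Suc k) \<subseteq> krylov A c (Suc (Suc k))"
    by (rule krylov_subset_Suc)+
  have res': "r' = c - A *v x'" using res
    by (simp add: r'_def x'_def matrix_vector_right_distrib matrix_vector_mult_scaleR)
  have x'_kr: "x' \<in> krylov A c (Suc k)" unfolding x'_def
    using x_kr d_kr kr_Suc by (intro subspace_add subspace_scale) auto
  have r'_kr: "r' \<in> krylov A c (Suc (Suc k))" unfolding r'_def
    using r_kr d_kr kr_Suc matrix_vector_mult_in_krylov_Suc[OF d_kr]
    by (intro subspace_diff subspace_scale) auto
  have d'_kr: "d' \<in> krylov A c (Suc (Suc k))" unfolding d'_def
    using r'_kr d_kr kr_Suc by (intro subspace_add subspace_scale) auto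
  show ?case
  proof (cases "rr = 0")
    case True
    then have "x' = x" "r' = 0" "d' = 0" by (auto simp: \<alpha>_def x'_def r'_def \<gamma>_def d'_def)
    then show ?thesis using st' res x_kr True kr_Suc by (auto intro: subspace_0)
  next
    case False
    have rr_pos: "rr \<bullet> rr > 0" using False by simp
    have "d \<noteq> 0" using rd False by auto
    hence dAd: "d \<bullet> (A *v d) > 0" using pd by auto
    have d_new: "d \<notin> krylov A c k" using orth dAd by auto
    have \<alpha>d: "\<alpha> * (d \<bullet> (A *v d)) = rr \<bullet> rr" using dAd by (simp add: \<alpha>_def)
    have \<alpha>_pos: "\<alpha> > 0" using dAd rr_pos by (simp add: \<alpha>_def)
    have r'd: "r' \<bullet> d = 0"
      using rd \<alpha>d by (simp add: r'_def inner_diff_left inner_commute[of "A *v d" d])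
    have r'_orth: "\<forall>y\<in>krylov A c (Suc k). r' \<bullet> y = 0"
    proof
      fix y assume "y \<in> krylov A c (Suc k)"
      then obtain t z where z: "z \<in> krylov A c k" "y = t *\<^sub>R d + z"
        using krylov_Suc_decompose[OF d_kr d_new] by blast
      have "r' \<bullet> z = 0" using orth z(1)
        by (simp add: r'_def inner_diff_left symA[symmetric])
      then show "r' \<bullet> y = 0" using r'd z(2) by (simp add: inner_add_right)
    qed
    have r'r: "r' \<bullet> rr = 0" using r'_orth r_kr by auto
    have r'Ad: "\<alpha> * (r' \<bullet> (A *v d)) = - (r' \<bullet> r')"
    proof -
      have "\<alpha> *\<^sub>R (A *v d) = rr - r'" by (simp add: r'_def)
      hence "r' \<bullet> (\<alpha> *\<^sub>R (A *v d)) = r' \<bullet> rr - r' \<bullet> r'" by (simp add: inner_diff_right)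
      thus ?thesis using r'r by simp
    qed
    have d'Ad: "d' \<bullet> (A *v d) = 0"
    proof -
      have "\<alpha> * (d' \<bullet> (A *v d)) = \<alpha> * (r' \<bullet> (A *v d)) + \<gamma> * (\<alpha> * (d \<bullet> (A *v d)))"
        by (simp add: d'_def inner_add_left algebra_simps)
      also have "\<dots> = 0" using r'Ad \<alpha>d rr_pos by (simp add: \<gamma>_def)
      finally show ?thesis using \<alpha>_pos by simp
    qed
    have d'_conj: "\<forall>y\<in>krylov A c (Suc k). d' \<bullet> (A *v y) = 0"
    proof
      fix y assume "y \<in> krylov A c (Suc k)"
      then obtain t z where z: "z \<in> krylov A c k" "y = t *\<^sub>R d + z"
        using krylov_Suc_decompose[OF d_kr d_new] by blast
      have "d' \<bullet> (A *v z) = 0"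
        using orth z(1) r'_orth matrix_vector_mult_in_krylov_Suc[OF z(1)]
        by (simp add: d'_def inner_add_left)
      then show "d' \<bullet> (A *v y) = 0" using d'Ad z(2)
        by (simp add: matrix_vector_right_distrib matrix_vector_mult_scaleR inner_add_right)
    qed
    have "r' \<bullet> d' = r' \<bullet> r'" using r'd by (simp add: d'_def inner_add_right)
    then show ?thesis using st' res' x'_kr r'_kr d'_kr r'_orth d'_conj by blast
  qed
qed

lemma cg_energy_optimal:
  fixes A :: "real^'n^'n"
  assumes sym: "symm A" and pd: "\<And>x. x \<noteq> 0 \<Longrightarrow> 0 < x \<bullet> (A *v x)"
    and y: "y \<in> krylov A (A *v p) k"
  shows "(p - cg A (A *v p) k) \<bullet> (A *v (p - cg A (A *v p) k)) \<le> (p - y) \<bullet> (A *v (p - y))"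
proof -
  obtain x rr d where st: "cg_state A (A *v p) k = (x, rr, d)" and res: "rr = A *v p - A *v x"
    and x_kr: "x \<in> krylov A (A *v p) k" and orth: "\<forall>y\<in>krylov A (A *v p) k. rr \<bullet> y = 0"
    using cg_state_invariant[OF sym pd, of "A *v p" k] by blast
  have symA: "\<And>u v. u \<bullet> (A *v v) = (A *v u) \<bullet> v" using sym by (simp add: symm_def)
  define e where "e = p - x"
  define u where "u = x - y"
  have "u \<in> krylov A (A *v p) k"
    unfolding u_def using x_kr y by (rule subspace_diff[OF subspace_krylov])
  hence "u \<bullet> (A *v e) = 0"
    using orth res by (simp add: e_def matrix_vector_mult_diff_distrib inner_commute)
  moreover have "0 \<le> u \<bullet> (A *v u)" using pd[of u] by (cases "u = 0") auto
  moreover have "p - y = e + u" by (simp add: e_def u_def)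
  hence "(p - y) \<bullet> (A *v (p - y)) = e \<bullet> (A *v e) + 2 * (u \<bullet> (A *v e)) + u \<bullet> (A *v u)"
    by (simp add: matrix_vector_right_distrib inner_add_left inner_add_right symA[of e u]
        inner_commute[of "A *v e" u])
  ultimately show ?thesis by (simp add: cg_def st e_def)
qed

definition poly_mv :: "real poly \<Rightarrow> real^'n^'n \<Rightarrow> real^'n \<Rightarrow> real^'n" where
  "poly_mv p A x = (\<Sum>i\<le>degree p. coeff p i *\<^sub>R ((*v) A ^^ i) x)"

lemma linear_funpow_matrix_vector_mult: "linear ((*v) (A::real^'n^'n) ^^ i)"
  by (induction i) (auto intro: linear_compose[OF _ matrix_vector_mul_linear, unfolded o_def]
      simp: linear_id[unfolded id_def])

lemma linear_poly_mv: "linear (poly_mv p A)"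
  unfolding poly_mv_def
  by (intro linear_compose_sum ballI linear_compose_scale_right linear_funpow_matrix_vector_mult)

lemma poly_mv_eigenvector:
  assumes "A *v v = l *\<^sub>R v"
  shows "poly_mv p A v = poly p l *\<^sub>R v"
proof -
  have "((*v) A ^^ i) v = (l ^ i) *\<^sub>R v" for i
    using assms by (induction i) (auto simp: matrix_vector_mult_scaleR)
  then show ?thesis by (simp add: poly_mv_def poly_altdef scaleR_sum_left)
qed

lemma poly_mv_in_invariant_subspace:
  assumes "subspace S" "\<forall>x\<in>S. A *v x \<in> S" "x \<in> S"
  shows "poly_mv p A x \<in> S"
proof -
  have "((*v) A ^^ i) x \<in> S" for i using assms by (induction i) auto
  then show ?thesis unfolding poly_mv_def using assms(1) by (intro subspace_sum subspace_scale) auto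
qed

lemma poly_mv_residual_in_krylov:
  assumes "poly p 0 = 1"
  shows "x - poly_mv p A x \<in> krylov A (A *v x) (degree p)"
proof (cases "degree p")
  case 0
  then have "poly_mv p A x = x" using assms by (simp add: poly_mv_def poly_0_coeff_0)
  then show ?thesis by (simp add: subspace_0)
next
  case (Suc m)
  have "coeff p 0 = 1" using assms by (simp add: poly_0_coeff_0)
  then have "x - poly_mv p A x = - (\<Sum>i\<le>m. coeff p (Suc i) *\<^sub>R ((*v) A ^^ i) (A *v x))"
    unfolding poly_mv_def Suc sum.atMost_Suc_shift by (simp add: funpow_Suc_right del: funpow.simps)
  also have "\<dots> \<in> krylov A (A *v x) (degree p)"
    unfolding Suc krylov_def
    by (intro subspace_neg subspace_sum[OF subspace_span] subspace_scale[OF subspace_span]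
        span_base) auto
  finally show ?thesis .
qed

lemma nonneg_eq_0_if_quadratic_nonpos:
  fixes m K :: real
  assumes "m \<ge> 0" and "\<And>t. t > 0 \<Longrightarrow> 2*t*m + t^2*K \<le> 0"
  shows "m = 0"
proof (rule ccontr)
  assume "m \<noteq> 0" hence m: "m > 0" using assms by simp
  define t where "t = m / (\<bar>K\<bar> + 1)"
  have t: "t > 0" using m by (simp add: t_def)
  have "t * \<bar>K\<bar> \<le> m" using m by (simp add: t_def field_simps)
  hence "t^2 * \<bar>K\<bar> \<le> t * m" using t by (simp add: power2_eq_square mult.assoc mult_left_mono)
  moreover have "- (t^2 * \<bar>K\<bar>) \<le> t^2*K"
    using mult_left_mono[of "-\<bar>K\<bar>" K "t^2"] by simp
  moreover have "t*m > 0" using t m by simp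
  ultimately show False using assms(2)[OF t] by linarith
qed

lemma quadratic_form_scaleR: "(c *\<^sub>R x) \<bullet> (A *v (c *\<^sub>R x)) = c^2 * (x \<bullet> (A *v (x::real^'n)))"
  by (simp add: matrix_vector_mult_scaleR power2_eq_square)

text \<open>A maximiser of the Rayleigh quotient on the unit sphere of \<open>S\<close> is an eigenvector.\<close>
lemma symm_invariant_subspace_has_eigenvector:
  fixes A :: "real^'n^'n"
  assumes sym: "symm A" and S: "subspace S" and inv: "\<forall>x\<in>S. A *v x \<in> S" and ne: "S \<noteq> {0}"
  obtains v where "v \<in> S" "norm v = 1" "A *v v = (v \<bullet> (A *v v)) *\<^sub>R v"
proof -
  have symA: "\<And>u v. u \<bullet> (A *v v) = (A *v u) \<bullet> v" using sym by (simp add: symm_def)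
  define T where "T = S \<inter> sphere 0 1"
  have "compact T" unfolding T_def using closed_subspace[OF S] compact_sphere
    by (metis compact_Int_closed inf_commute)
  moreover obtain u where u: "u \<in> S" "u \<noteq> 0" using ne subspace_0[OF S] by blast
  then have "(1 / norm u) *\<^sub>R u \<in> T" unfolding T_def using S by (auto intro: subspace_scale)
  hence "T \<noteq> {}" by blast
  moreover have "continuous_on T (\<lambda>x. x \<bullet> (A *v x))" by (intro continuous_intros)
  ultimately obtain v where vT: "v \<in> T" and vmax: "\<forall>y\<in>T. y \<bullet> (A *v y) \<le> v \<bullet> (A *v v)"
    using continuous_attains_sup by blast
  define l where "l = v \<bullet> (A *v v)"
  have vS: "v \<in> S" and nv: "norm v = 1" using vT by (auto simp: T_def)
  have vv: "v \<bullet> v = 1" using nv by (simp add: dot_square_norm)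
  have rayleigh: "x \<bullet> (A *v x) \<le> l * (x \<bullet> x)" if x: "x \<in> S" for x
  proof (cases "x = 0")
    case False
    have "(1 / norm x) *\<^sub>R x \<in> T" unfolding T_def using x False S by (auto intro: subspace_scale)
    hence "((1 / norm x) *\<^sub>R x) \<bullet> (A *v ((1 / norm x) *\<^sub>R x)) \<le> l"
      using vmax unfolding l_def by blast
    hence "(1/norm x)^2 * (x \<bullet> (A *v x)) \<le> l" by (simp only: quadratic_form_scaleR)
    hence "x \<bullet> (A *v x) \<le> l * (norm x)^2" using False by (simp add: field_simps)
    thus ?thesis by (simp add: dot_square_norm)
  qed simp
  define w where "w = A *v v - l *\<^sub>R v"
  have wS: "w \<in> S" unfolding w_def using vS inv S by (auto intro: subspace_diff subspace_scale)
  have vw: "v \<bullet> w = 0" by (simp add: w_def inner_diff_right vv l_def)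
  have vAw: "v \<bullet> (A *v w) = w \<bullet> w"
    using symA[of v w] vw by (simp add: w_def inner_diff_left inner_commute)
  \<comment> \<open>perturbing \<open>v\<close> along \<open>w\<close> would otherwise increase the Rayleigh quotient\<close>
  have "w \<bullet> w = 0"
  proof (rule nonneg_eq_0_if_quadratic_nonpos[where K = "w \<bullet> (A *v w) - l * (w \<bullet> w)"])
    fix t :: real assume "t > 0"
    have "v + t *\<^sub>R w \<in> S" using vS wS S by (auto intro: subspace_add subspace_scale)
    moreover have
      "(v + t *\<^sub>R w) \<bullet> (A *v (v + t *\<^sub>R w)) = l + 2 * t * (w \<bullet> w) + t^2 * (w \<bullet> (A *v w))"
      using vAw symA[of w v]
      by (simp add: matrix_vector_right_distrib matrix_vector_mult_scaleR inner_add_left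
          inner_add_right l_def power2_eq_square algebra_simps inner_commute[of "A *v w" v])
    moreover have "(v + t *\<^sub>R w) \<bullet> (v + t *\<^sub>R w) = 1 + t^2 * (w \<bullet> w)"
      using vv vw by (simp add: inner_add_left inner_add_right power2_eq_square
        inner_commute[of w v])
    ultimately show "2 * t * (w \<bullet> w) + t^2 * (w \<bullet> (A *v w) - l * (w \<bullet> w)) \<le> 0"
      using rayleigh[of "v + t *\<^sub>R w"] by (simp add: algebra_simps)
  qed simp
  hence "A *v v = l *\<^sub>R v" by (simp add: w_def)
  thus ?thesis using vS nv that by (simp add: l_def)
qed

text \<open>By induction on \<open>dim S\<close>, splitting off one eigenvector at a time.\<close>
lemma poly_mv_energy_le:
  fixes A :: "real^'n^'n"
  assumes sym: "symm A" and lower: "\<And>x. a * (x \<bullet> x) \<le> x \<bullet> (A *v x)"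
    and upper: "\<And>x. x \<bullet> (A *v x) \<le> b * (x \<bullet> x)"
    and a: "0 \<le> a" and p: "\<And>l. a \<le> l \<Longrightarrow> l \<le> b \<Longrightarrow> \<bar>poly p l\<bar> \<le> C"
  shows "subspace S \<Longrightarrow> \<forall>x\<in>S. A *v x \<in> S \<Longrightarrow> x \<in> S
     \<Longrightarrow> (poly_mv p A x) \<bullet> (A *v poly_mv p A x) \<le> C^2 * (x \<bullet> (A *v x))"
proof (induction "dim S" arbitrary: S x rule: less_induct)
  case less
  have symA: "\<And>u v. u \<bullet> (A *v v) = (A *v u) \<bullet> v" using sym by (simp add: symm_def)
  show ?case
  proof (cases "S = {0}")
    case True
    then show ?thesis using less.prems by (simp add: linear_0[OF linear_poly_mv])
  next
    case False
    then obtain v where vS: "v \<in> S" and nv: "norm v = 1" and ev: "A *v v = (v \<bullet> (A *v v)) *\<^sub>R v"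
      using symm_invariant_subspace_has_eigenvector[OF sym less.prems(1,2)] by blast
    define l where "l = v \<bullet> (A *v v)"
    have vv: "v \<bullet> v = 1" using nv by (simp add: dot_square_norm)
    have ev': "A *v v = l *\<^sub>R v" using ev by (simp add: l_def)
    have la: "a \<le> l" and lb: "l \<le> b" using lower[of v] upper[of v] vv by (simp_all add: l_def)
    define S' where "S' = S \<inter> {z. orthogonal v z}"
    have S': "subspace S'" unfolding S'_def
      by (intro subspace_inter less.prems(1) subspace_orthogonal_to_vector)
    have vz: "v \<bullet> z = 0" "z \<bullet> v = 0" "v \<bullet> (A *v z) = 0" "z \<bullet> (A *v v) = 0" if "z \<in> S'" for z
      using that symA[of v z] ev' by (auto simp: S'_def orthogonal_def inner_commute)
    have inv': "\<forall>x\<in>S'. A *v x \<in> S'"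
      using less.prems(2) vz by (auto simp: S'_def orthogonal_def)
    have "S' \<subseteq> S" "v \<notin> S'" using vv by (auto simp: S'_def orthogonal_def)
    hence "S' \<subset> S" using vS by blast
    hence dim_less: "dim S' < dim S"
      using S' less.prems(1) dim_psubset[of S' S] by (simp add: span_eq_iff[THEN iffD2])
    have energy_split: "(t *\<^sub>R v + z) \<bullet> (A *v (t *\<^sub>R v + z)) = t^2 * l + z \<bullet> (A *v z)"
      if "z \<in> S'" for t z
      using vz[OF that] ev' vv
      by (simp add: matrix_vector_right_distrib matrix_vector_mult_scaleR inner_add_left
          inner_add_right power2_eq_square algebra_simps)
    define z where "z = x - (v \<bullet> x) *\<^sub>R v"
    have zS': "z \<in> S'" unfolding S'_def z_def using less.prems vS vv
      by (auto intro!: subspace_diff subspace_scale simp: orthogonal_def inner_diff_right)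
    have x_split: "x = (v \<bullet> x) *\<^sub>R v + z" by (simp add: z_def)
    have "poly_mv p A x = ((v \<bullet> x) * poly p l) *\<^sub>R v + poly_mv p A z"
      by (subst x_split) (simp add: linear_add[OF linear_poly_mv] linear_scale[OF linear_poly_mv]
          poly_mv_eigenvector[OF ev'])
    then have "poly_mv p A x \<bullet> (A *v poly_mv p A x)
        = (v \<bullet> x)^2 * l * (poly p l)^2 + poly_mv p A z \<bullet> (A *v poly_mv p A z)"
      using energy_split[OF poly_mv_in_invariant_subspace[OF S' inv' zS']]
      by (simp add: power_mult_distrib mult_ac)
    also have "\<dots> \<le> (v \<bullet> x)^2 * l * C^2 + C^2 * (z \<bullet> (A *v z))"
    proof (rule add_mono)
      show "(v \<bullet> x)^2 * l * (poly p l)^2 \<le> (v \<bullet> x)^2 * l * C^2"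
        using power_mono[OF p[OF la lb] abs_ge_zero, of 2] la a by (intro mult_left_mono) simp_all
      show "poly_mv p A z \<bullet> (A *v poly_mv p A z) \<le> C^2 * (z \<bullet> (A *v z))"
        by (rule less.hyps[OF dim_less S' inv' zS'])
    qed
    also have "\<dots> = C^2 * (x \<bullet> (A *v x))"
      by (subst (2 3) x_split, subst energy_split[OF zS']) (simp add: algebra_simps)
    finally show ?thesis .
  qed
qed

fun chebyshev :: "nat \<Rightarrow> real poly" where
  "chebyshev 0 = 1"
| "chebyshev (Suc 0) = [:0,1:]"
| "chebyshev (Suc (Suc n)) = [:0,2:] * chebyshev (Suc n) - chebyshev n"

lemma degree_chebyshev: "degree (chebyshev n) \<le> n"
proof (induction n rule: chebyshev.induct)
  case (3 n)
  have "degree ([:0,2:] * chebyshev (Suc n)) \<le> Suc (Suc n)"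
    using degree_mult_le[of "[:0::real,2:]" "chebyshev (Suc n)"] 3(1) by simp
  moreover have "degree (chebyshev n) \<le> Suc (Suc n)" using 3(2) by simp
  ultimately show ?case unfolding chebyshev.simps by (rule degree_diff_le)
qed auto

lemma poly_chebyshev_cos: "poly (chebyshev n) (cos t) = cos (real n * t)"
proof (induction n rule: chebyshev.induct)
  case (3 n)
  define X where "X = real (Suc n) * t"
  have "poly (chebyshev (Suc (Suc n))) (cos t) = 2 * cos t * cos X - cos (X - t)"
    using 3 by (simp add: X_def algebra_simps)
  also have "\<dots> = cos (X + t)" by (simp add: cos_add cos_diff)
  finally show ?case by (simp add: X_def algebra_simps)
qed auto

lemma abs_poly_chebyshev_le_1: "\<bar>z\<bar> \<le> 1 \<Longrightarrow> \<bar>poly (chebyshev n) z\<bar> \<le> 1"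
  using poly_chebyshev_cos[of n "arccos z"] cos_arccos[of z] by (simp add: abs_le_iff)

lemma poly_chebyshev_joukowski:
  assumes "\<rho> \<noteq> 0"
  shows "poly (chebyshev n) ((\<rho> + inverse \<rho>) / 2) = (\<rho>^n + inverse \<rho>^n) / 2"
proof (induction n rule: chebyshev.induct)
  case (3 n)
  define u where "u = inverse \<rho>"
  have ru: "\<rho> * u = 1" using assms by (simp add: u_def)
  have "poly (chebyshev (Suc (Suc n))) ((\<rho> + u)/2)
      = (\<rho> + u) * poly (chebyshev (Suc n)) ((\<rho> + u)/2) - poly (chebyshev n) ((\<rho> + u)/2)"
    by simp
  also have "\<dots> = (\<rho> + u) * ((\<rho>^(Suc n) + u^(Suc n))/2) - (\<rho>^n + u^n)/2"
    using 3 unfolding u_def by (simp only:)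
  also have "\<dots> = (\<rho>^(Suc (Suc n)) + u^(Suc (Suc n)) + (\<rho> * u) * u^n + (\<rho> * u) * \<rho>^n - \<rho>^n - u^n)/2"
    by (simp add: field_simps)
  also have "\<dots> = (\<rho>^(Suc (Suc n)) + u^(Suc (Suc n)))/2" by (simp add: ru)
  finally show ?case by (simp add: u_def power_inverse)
qed auto

text \<open>
  The rescaled Chebyshev polynomial \<open>T\<^sub>r((b + a - 2\<lambda>)/(b - a)) / T\<^sub>r((b + a)/(b - a))\<close>;
  the denominator is evaluated through \<open>(b + a)/(b - a) = (\<rho> + \<rho>\<^sup>-\<^sup>1)/2\<close> with
  \<open>\<rho> = (\<surd>\<kappa> + 1)/(\<surd>\<kappa> - 1)\<close>, \<open>\<kappa> = b/a\<close>.
\<close>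
lemma chebyshev_residual_polynomial:
  fixes a b :: real assumes a: "0 < a" and ab: "a \<le> b"
  obtains p where "poly p 0 = 1" "degree p \<le> r"
    "\<And>l. a \<le> l \<Longrightarrow> l \<le> b \<Longrightarrow> \<bar>poly p l\<bar> \<le> 2 * ((sqrt (b/a) - 1)/(sqrt (b/a) + 1))^r"
proof (cases "a = b")
  case True
  then have "(sqrt (b/a) - 1)/(sqrt (b/a) + 1) = 0" using a by simp
  then show ?thesis using True a
    by (cases r) (auto intro: that[of 1] that[of "[:1, -1/a:]"])
next
  case False
  hence ab': "a < b" using ab by simp
  define s where "s = sqrt (b/a)"
  have s: "s > 1" "b = s^2 * a" using a ab' by (simp_all add: s_def)
  define \<rho> where "\<rho> = (s+1)/(s-1)"
  have \<rho>: "\<rho> > 1" using s by (simp add: \<rho>_def)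
  have "1 < s * s" using s less_1_mult by blast
  hence joukowski: "(\<rho> + inverse \<rho>)/2 = (b+a)/(b-a)"
    using s a unfolding \<rho>_def by (simp add: field_simps power2_eq_square)
  define q where "q = [:(b+a)/(b-a), -2/(b-a):]"
  define T0 where "T0 = (\<rho>^r + inverse \<rho>^r)/2"
  have T0: "poly (chebyshev r) ((b+a)/(b-a)) = T0"
    using poly_chebyshev_joukowski[of \<rho> r] \<rho> joukowski by (simp add: T0_def)
  have T0_ge: "T0 \<ge> \<rho>^r / 2" and \<rho>r: "\<rho>^r > 0" using \<rho> by (simp_all add: T0_def)
  define p where "p = smult (1/T0) (pcompose (chebyshev r) q)"
  show ?thesis
  proof (rule that)
    show "poly p 0 = 1" using T0 T0_ge \<rho>r by (simp add: p_def poly_pcompose q_def)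
    have "degree p \<le> degree (chebyshev r) * degree q" by (simp add: p_def degree_pcompose)
    also have "\<dots> \<le> r" using degree_chebyshev[of r] by (simp add: q_def)
    finally show "degree p \<le> r" .
  next
    fix l assume l: "a \<le> l" "l \<le> b"
    have "poly q l = ((b+a) - 2*l)/(b-a)" by (simp add: q_def diff_divide_distrib)
    moreover have "\<bar>((b+a) - 2*l)/(b-a)\<bar> \<le> 1" using l ab' by (simp add: abs_le_iff field_simps)
    ultimately have "\<bar>poly (chebyshev r) (poly q l)\<bar> \<le> 1" using abs_poly_chebyshev_le_1 by simp
    hence "\<bar>poly p l\<bar> \<le> 1 / T0" using T0_ge \<rho>r
      by (simp add: p_def poly_pcompose abs_mult divide_right_mono)
    also have "\<dots> \<le> 1 / (\<rho>^r/2)" using T0_ge \<rho>r by (intro divide_left_mono) auto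
    also have "\<dots> = 2 * (inverse \<rho>)^r" by (simp add: power_inverse field_simps)
    also have "inverse \<rho> = (sqrt (b/a) - 1)/(sqrt (b/a) + 1)" by (simp add: \<rho>_def s_def)
    finally show "\<bar>poly p l\<bar> \<le> 2 * ((sqrt (b/a) - 1)/(sqrt (b/a) + 1))^r" .
  qed
qed

lemma cg_error_bound:
  fixes A :: "real^'n^'n"
  assumes sym: "symm A" and lower: "\<And>x. a * (x \<bullet> x) \<le> x \<bullet> (A *v x)"
    and upper: "\<And>x. x \<bullet> (A *v x) \<le> b * (x \<bullet> x)" and a: "0 < a" and ab: "a \<le> b"
  shows "norm (cg A (A *v x) r - x)
    \<le> 2 * sqrt (b/a) * ((sqrt (b/a) - 1)/(sqrt (b/a) + 1))^r * norm x"
proof -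
  define \<theta> where "\<theta> = (sqrt (b/a) - 1)/(sqrt (b/a) + 1)"
  obtain p where p0: "poly p 0 = 1" and p_deg: "degree p \<le> r"
    and p_bound: "\<And>l. a \<le> l \<Longrightarrow> l \<le> b \<Longrightarrow> \<bar>poly p l\<bar> \<le> 2 * \<theta>^r"
    using chebyshev_residual_polynomial[OF a ab] unfolding \<theta>_def by blast
  define C where "C = 2 * \<theta>^r"
  have C: "0 \<le> C" using a ab by (simp add: C_def \<theta>_def)
  have pd: "0 < y \<bullet> (A *v y)" if "y \<noteq> 0" for y
    using lower[of y] that a by (smt (verit) inner_gt_zero_iff mult_pos_pos)
  define e where "e = x - cg A (A *v x) r"
  have "x - poly_mv p A x \<in> krylov A (A *v x) r"
    using poly_mv_residual_in_krylov[OF p0] krylov_mono[OF p_deg] by blast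
  from cg_energy_optimal[OF sym pd this]
  have "e \<bullet> (A *v e) \<le> poly_mv p A x \<bullet> (A *v poly_mv p A x)" by (simp add: e_def)
  also have "\<dots> \<le> C^2 * (x \<bullet> (A *v x))"
    using poly_mv_energy_le[OF sym lower upper less_imp_le[OF a], of p C UNIV] p_bound
    by (simp add: C_def)
  also have "\<dots> \<le> C^2 * (b * (x \<bullet> x))" using upper[of x] by (intro mult_left_mono) auto
  finally have "a * (e \<bullet> e) \<le> C^2 * (b * (x \<bullet> x))" using lower[of e] by linarith
  hence "(norm e)^2 \<le> (C * sqrt (b/a) * norm x)^2"
    using a ab by (simp add: dot_square_norm field_simps power_mult_distrib)
  hence "norm e \<le> C * sqrt (b/a) * norm x"
    by (rule power2_le_imp_le) (use C a ab in simp)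
  thus ?thesis by (simp add: e_def norm_minus_commute C_def \<theta>_def algebra_simps)
qed

section \<open>Second derivatives\<close>

lemma has_real_derivative_along_line:
  fixes F :: "real^'n \<Rightarrow> real"
  assumes F': "\<And>v. (F has_derivative (\<lambda>h. g v \<bullet> h)) (at v)"
  shows "((\<lambda>s. F (p + s *\<^sub>R a)) has_real_derivative (g (p + s *\<^sub>R a) \<bullet> a)) (at s)"
proof -
  have "((\<lambda>s. p + s *\<^sub>R a) has_derivative (\<lambda>h. h *\<^sub>R a)) (at s)"
    by (auto intro!: derivative_eq_intros)
  from has_derivative_compose[OF this F']
  show ?thesis unfolding has_field_derivative_def
    by (rule has_derivative_eq_rhs) (simp add: fun_eq_iff mult.commute)
qed

lemma has_real_derivative_inner_along_line:
  fixes G :: "real^'n \<Rightarrow> real^'n"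
  assumes G': "\<And>v. (G has_derivative (\<lambda>h. H v *v h)) (at v)"
  shows "((\<lambda>s. G (p + s *\<^sub>R b) \<bullet> a) has_real_derivative ((H (p + s *\<^sub>R b) *v b) \<bullet> a)) (at s)"
proof -
  have "((\<lambda>s. p + s *\<^sub>R b) has_derivative (\<lambda>h. h *\<^sub>R b)) (at s)"
    by (auto intro!: derivative_eq_intros)
  from has_derivative_inner[OF has_derivative_compose[OF this G'] has_derivative_const[of a]]
  show ?thesis unfolding has_field_derivative_def
    by (rule has_derivative_eq_rhs) (simp add: fun_eq_iff matrix_vector_mult_scaleR)
qed

lemma second_difference_mean_value:
  fixes F :: "real^'n \<Rightarrow> real"
  assumes F': "\<And>v. (F has_derivative (\<lambda>h. g v \<bullet> h)) (at v)"
    and g': "\<And>v. (g has_derivative (\<lambda>h. H v *v h)) (at v)"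
    and e: "0 < e"
  obtains p where "norm (p - v) \<le> e * (norm a + norm b)"
    "F (v + e *\<^sub>R a + e *\<^sub>R b) - F (v + e *\<^sub>R a) - F (v + e *\<^sub>R b) + F v = e^2 * ((H p *v b) \<bullet> a)"
proof -
  define h where "h = (\<lambda>s. F ((v + e *\<^sub>R b) + s *\<^sub>R a) - F (v + s *\<^sub>R a))"
  have "(h has_real_derivative (g ((v + e *\<^sub>R b) + s *\<^sub>R a) \<bullet> a - g (v + s *\<^sub>R a) \<bullet> a)) (at s)"
    for s
    unfolding h_def by (intro DERIV_diff has_real_derivative_along_line[OF F'])
  then obtain s where s: "0 < s" "s < e"
    and hs: "h e - h 0 = e * (g ((v + e *\<^sub>R b) + s *\<^sub>R a) \<bullet> a - g (v + s *\<^sub>R a) \<bullet> a)"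
    using MVT2[OF e, of h] by force
  define k where "k = (\<lambda>t. g ((v + s *\<^sub>R a) + t *\<^sub>R b) \<bullet> a)"
  have "(k has_real_derivative ((H ((v + s *\<^sub>R a) + t *\<^sub>R b) *v b) \<bullet> a)) (at t)" for t
    unfolding k_def by (rule has_real_derivative_inner_along_line[OF g'])
  then obtain t where t: "0 < t" "t < e"
    and kt: "k e - k 0 = e * ((H ((v + s *\<^sub>R a) + t *\<^sub>R b) *v b) \<bullet> a)"
    using MVT2[OF e, of k] by force
  define p where "p = (v + s *\<^sub>R a) + t *\<^sub>R b"
  have "norm (p - v) \<le> norm (s *\<^sub>R a) + norm (t *\<^sub>R b)"
    unfolding p_def using norm_triangle_ineq[of "s *\<^sub>R a" "t *\<^sub>R b"] by simp
  also have "\<dots> \<le> e * norm a + e * norm b" using s t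
    by (intro add_mono) (auto intro: mult_right_mono)
  finally have "norm (p - v) \<le> e * (norm a + norm b)" by (simp add: algebra_simps)
  moreover have "F (v + e *\<^sub>R a + e *\<^sub>R b) - F (v + e *\<^sub>R a) - F (v + e *\<^sub>R b) + F v
      = e^2 * ((H p *v b) \<bullet> a)"
  proof -
    have "F (v + e *\<^sub>R a + e *\<^sub>R b) - F (v + e *\<^sub>R a) - F (v + e *\<^sub>R b) + F v = e * (k e - k 0)"
      using hs by (simp add: h_def k_def algebra_simps)
    also have "\<dots> = e^2 * ((H p *v b) \<bullet> a)" using kt by (simp add: p_def power2_eq_square)
    finally show ?thesis .
  qed
  ultimately show ?thesis by (rule that)
qed

lemma bounded_linear_matrix_vector_mult_left: "bounded_linear (\<lambda>M::real^'n^'m. M *v x)"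
proof -
  have "linear (\<lambda>M::real^'n^'m. M *v x)"
    by (rule linearI) (simp_all add: matrix_vector_mult_add_rdistrib scaleR_matrix_vector_assoc)
  then show ?thesis by (simp add: linear_conv_bounded_linear)
qed

lemma isCont_matrix_bilinear:
  fixes H :: "real^'n \<Rightarrow> real^'n^'n"
  assumes "continuous_on UNIV H"
  shows "isCont (\<lambda>p. (H p *v b) \<bullet> a) v"
proof -
  have "bounded_linear (\<lambda>M::real^'n^'n. (M *v b) \<bullet> a)"
    by (intro bounded_linear_inner_left_comp bounded_linear_matrix_vector_mult_left)
  then have "isCont (\<lambda>M::real^'n^'n. (M *v b) \<bullet> a) (H v)" by (rule linear_continuous_at)
  moreover have "isCont H v" using assms by (simp add: continuous_on_eq_continuous_at)
  ultimately show ?thesis by (rule isCont_o2[rotated])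
qed

text \<open>Schwarz's theorem, via the mean value theorem applied twice to a second difference.\<close>
lemma hessian_symmetric:
  fixes F :: "real^'n \<Rightarrow> real"
  assumes F': "\<And>v. (F has_derivative (\<lambda>h. g v \<bullet> h)) (at v)"
    and g': "\<And>v. (g has_derivative (\<lambda>h. H v *v h)) (at v)"
    and H: "continuous_on UNIV H"
  shows "symm (H v)"
proof -
  have "(H v *v b) \<bullet> a = (H v *v a) \<bullet> b" for a b
  proof (rule ccontr)
    define q1 where "q1 = (\<lambda>p. (H p *v b) \<bullet> a)"
    define q2 where "q2 = (\<lambda>p. (H p *v a) \<bullet> b)"
    assume "(H v *v b) \<bullet> a \<noteq> (H v *v a) \<bullet> b"
    define \<epsilon> where "\<epsilon> = \<bar>q1 v - q2 v\<bar> / 2"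
    have \<epsilon>: "0 < \<epsilon>" using \<open>(H v *v b) \<bullet> a \<noteq> _\<close> by (simp add: \<epsilon>_def q1_def q2_def)
    obtain d1 where d1: "d1 > 0" "\<And>p. dist p v < d1 \<Longrightarrow> dist (q1 p) (q1 v) < \<epsilon>"
      using isCont_matrix_bilinear[OF H] \<epsilon> unfolding q1_def continuous_at_eps_delta by blast
    obtain d2 where d2: "d2 > 0" "\<And>p. dist p v < d2 \<Longrightarrow> dist (q2 p) (q2 v) < \<epsilon>"
      using isCont_matrix_bilinear[OF H] \<epsilon> unfolding q2_def continuous_at_eps_delta by blast
    define e where "e = min d1 d2 / (2 * (norm a + norm b + 1))"
    have denom: "0 < 2 * (norm a + norm b + 1)" by (simp add: add_nonneg_pos)
    have e: "0 < e" using d1 d2 denom unfolding e_def by (intro divide_pos_pos) auto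
    have close: "e * (norm a + norm b) < min d1 d2"
    proof -
      have "e * (norm a + norm b) \<le> e * (norm a + norm b + 1)" using e by simp
      also have "\<dots> = min d1 d2 / 2" using denom unfolding e_def by (simp add: field_simps)
      also have "\<dots> < min d1 d2" using d1(1) d2(1) by (simp add: min_def)
      finally show ?thesis .
    qed
    \<comment> \<open>the second difference is symmetric in \<open>a\<close> and \<open>b\<close>\<close>
    obtain p1 where p1: "norm (p1 - v) \<le> e * (norm a + norm b)"
      and f1: "F (v + e *\<^sub>R a + e *\<^sub>R b) - F (v + e *\<^sub>R a) - F (v + e *\<^sub>R b) + F v = e^2 * q1 p1"
      using second_difference_mean_value[OF F' g' e, of v a b] unfolding q1_def by blast
    obtain p2 where p2: "norm (p2 - v) \<le> e * (norm b + norm a)"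
      and f2: "F (v + e *\<^sub>R b + e *\<^sub>R a) - F (v + e *\<^sub>R b) - F (v + e *\<^sub>R a) + F v = e^2 * q2 p2"
      using second_difference_mean_value[OF F' g' e, of v b a] unfolding q2_def by blast
    have "v + e *\<^sub>R b + e *\<^sub>R a = v + e *\<^sub>R a + e *\<^sub>R b" by (simp add: algebra_simps)
    with f1 f2 have "e^2 * q1 p1 = e^2 * q2 p2" by (simp only:)
    hence "q1 p1 = q2 p2" using e by simp
    moreover have "dist p1 v < d1" "dist p2 v < d2"
      using p1 p2 close by (simp_all add: dist_norm add.commute)
    hence "\<bar>q1 p1 - q1 v\<bar> < \<epsilon>" "\<bar>q2 p2 - q2 v\<bar> < \<epsilon>"
      using d1(2) d2(2) by (simp_all add: dist_real_def)
    ultimately have "\<bar>q1 v - q2 v\<bar> < 2 * \<epsilon>" by linarith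
    then show False by (simp add: \<epsilon>_def)
  qed
  then show ?thesis unfolding symm_def by (metis inner_commute)
qed

lemma norm_le_if_inner_unit_le:
  fixes D :: "real^'n"
  assumes "\<And>u. norm u = 1 \<Longrightarrow> D \<bullet> u \<le> K"
  shows "norm D \<le> K"
proof (cases "D = 0")
  case True
  have "norm ((1/norm (1::real^'n)) *\<^sub>R (1::real^'n)) = 1" by simp
  from assms[OF this] show ?thesis using True by simp
next
  case False
  have "norm ((1/norm D) *\<^sub>R D) = 1" using False by simp
  from assms[OF this] show ?thesis using False by (simp add: dot_square_norm power2_eq_square)
qed

text \<open>
  Tested against unit vectors \<open>u\<close>; the correction term \<open>K(1 - t)\<^sup>2/2\<close> in the auxiliary
  function is what yields the factor \<open>1/2\<close>.
\<close>
lemma taylor_remainder_le: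
  fixes G :: "real^'n \<Rightarrow> real^'n"
  assumes G': "\<And>v. (G has_derivative (\<lambda>h. H v *v h)) (at v)"
    and lipschitz: "\<And>v z. mnorm (H v - H z) \<le> M * norm (v - z)"
  shows "norm (G w - G w' - H w *v (w - w')) \<le> M/2 * (norm (w - w'))^2"
proof (rule norm_le_if_inner_unit_le)
  fix u :: "real^'n" assume u: "norm u = 1"
  define e where "e = w - w'"
  define K where "K = M * (norm e)^2"
  define s where "s = (\<lambda>t. G (w' + t *\<^sub>R e) \<bullet> u - t * ((H w *v e) \<bullet> u) + K * (1-t)^2/2)"
  define s' where "s' = (\<lambda>t. (H (w' + t *\<^sub>R e) *v e) \<bullet> u - (H w *v e) \<bullet> u - K * (1-t))"
  have "(s has_real_derivative s' t) (at t)" for t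
    unfolding s_def s'_def
    by (rule derivative_eq_intros has_real_derivative_inner_along_line[OF G'] refl
        | simp add: field_simps)+
  then obtain z where z: "0 < z" "z < 1" and sz: "s 1 - s 0 = s' z"
    using MVT2[of 0 1 s s'] by auto
  have "s' z \<le> 0"
  proof -
    have "(H (w' + z *\<^sub>R e) *v e) \<bullet> u - (H w *v e) \<bullet> u = ((H (w' + z *\<^sub>R e) - H w) *v e) \<bullet> u"
      by (simp add: matrix_vector_mult_diff_rdistrib inner_diff_left)
    also have "\<dots> \<le> norm ((H (w' + z *\<^sub>R e) - H w) *v e) * norm u" by (rule norm_cauchy_schwarz)
    also have "\<dots> \<le> mnorm (H (w' + z *\<^sub>R e) - H w) * norm e" using u mnorm_bound by simp
    also have "\<dots> \<le> (M * norm (w' + z *\<^sub>R e - w)) * norm e"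
      by (intro mult_right_mono lipschitz) simp
    also have "w' + z *\<^sub>R e - w = (z - 1) *\<^sub>R e" by (simp add: e_def algebra_simps)
    also have "M * norm ((z - 1) *\<^sub>R e) * norm e = K * (1 - z)"
      using z by (simp add: K_def power2_eq_square)
    finally show ?thesis by (simp add: s'_def)
  qed
  hence "G w \<bullet> u - (H w *v e) \<bullet> u \<le> G w' \<bullet> u + K/2"
    using sz by (simp add: s_def e_def)
  thus "(G w - G w' - H w *v (w - w')) \<bullet> u \<le> M/2 * (norm (w - w'))^2"
    by (simp add: inner_diff_left K_def e_def)
qed

section \<open>Uniform sampling with replacement\<close>

lemma samples_Suc: "samples N (Suc b) = (\<lambda>(i,S). i # S) ` ({..<N} \<times> samples N b)"
proof
  show "samples N (Suc b) \<subseteq> (\<lambda>(i,S). i # S) ` ({..<N} \<times> samples N b)"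
  proof
    fix S assume "S \<in> samples N (Suc b)"
    then obtain i T where "S = i # T" "length T = b" "i < N" "set T \<subseteq> {..<N}"
      by (cases S) (auto simp: samples_def)
    thus "S \<in> (\<lambda>(i,S). i # S) ` ({..<N} \<times> samples N b)"
      by (auto simp: samples_def image_iff)
  qed
qed (auto simp: samples_def)

lemma samples_eq_lists: "samples N b = {xs. set xs \<subseteq> {..<N} \<and> length xs = b}"
  by (auto simp: samples_def)

lemma card_samples: "card (samples N b) = N ^ b"
  using card_lists_length_eq[of "{..<N}" b] by (simp add: samples_eq_lists)

lemma sum_samples_Suc:
  "(\<Sum>S\<in>samples N (Suc b). f S) = (\<Sum>i<N. \<Sum>S\<in>samples N b. f (i # S))"
proof -
  have "inj_on (\<lambda>(i,S). i # S) ({..<N} \<times> samples N b)"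
    by (auto simp: inj_on_def)
  then have "(\<Sum>S\<in>samples N (Suc b). f S) = (\<Sum>(i,S)\<in>{..<N} \<times> samples N b. f (i # S))"
    unfolding samples_Suc by (simp add: sum.reindex case_prod_unfold)
  also have "\<dots> = (\<Sum>i<N. \<Sum>S\<in>samples N b. f (i # S))"
    by (rule sum.cartesian_product[symmetric])
  finally show ?thesis .
qed

lemma sample_exp_mono:
  assumes "\<And>S. S \<in> samples N b \<Longrightarrow> X S \<le> Y S"
  shows "sample_exp N b X \<le> sample_exp N b Y"
  unfolding sample_exp_def using assms by (intro divide_right_mono sum_mono) auto

lemma sample_exp_affine:
  assumes "N \<ge> 1"
  shows "sample_exp N b (\<lambda>S. c * X S + d) = c * sample_exp N b X + d"
proof -
  have "real N ^ b > 0" using assms by simp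
  thus ?thesis unfolding sample_exp_def
    by (simp add: sum.distrib sum_distrib_left[symmetric] card_samples field_simps)
qed

text \<open>
  The variance of a sum of \<open>b\<close> independent draws of a centred vector-valued variable is
  \<open>b\<close> times the variance of one draw (both sides multiplied by \<open>N\<^sup>b\<^sup>+\<^sup>1\<close>).
\<close>
lemma sum_samples_norm_sum_list_squared:
  fixes u :: "nat \<Rightarrow> real^'n"
  assumes centred: "(\<Sum>i<N. u i) = 0"
  shows "real N * (\<Sum>S\<in>samples N b. (norm (sum_list (map u S)))^2)
       = real b * real N ^ b * (\<Sum>i<N. (norm (u i))^2)"
proof (induction b)
  case 0 show ?case by (simp add: samples_def)
next
  case (Suc b)
  let ?V = "\<lambda>S. sum_list (map u S)"
  have "(\<Sum>S\<in>samples N (Suc b). (norm (?V S))^2)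
      = (\<Sum>i<N. \<Sum>S\<in>samples N b. (norm (u i))^2 + 2 * (u i \<bullet> ?V S) + (norm (?V S))^2)"
    by (simp add: sum_samples_Suc power2_norm_eq_inner inner_add_left inner_add_right
        inner_commute algebra_simps)
  also have "\<dots> = real N ^ b * (\<Sum>i<N. (norm (u i))^2) + 2 * ((\<Sum>i<N. u i) \<bullet> (\<Sum>S\<in>samples N b. ?V S))
       + real N * (\<Sum>S\<in>samples N b. (norm (?V S))^2)"
    by (simp add: sum.distrib sum_distrib_left inner_sum_left inner_sum_right card_samples
        sum.swap[of _ "{..<N}"] sum_distrib_right[symmetric] mult.commute)
  finally show ?case using Suc centred by (simp add: algebra_simps)
qed

text \<open>Jensen (\<open>\<bbbE>X \<le> \<surd>(\<bbbE>X\<^sup>2)\<close>) combined with the variance identity.\<close>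
lemma sample_exp_norm_mean_le:
  fixes u :: "nat \<Rightarrow> real^'n"
  assumes centred: "(\<Sum>i<N. u i) = 0" and N: "N \<ge> 1" and b: "b \<ge> 1"
    and variance: "(\<Sum>i<N. (norm (u i))^2) \<le> real N * V"
  shows "sample_exp N b (\<lambda>S. norm ((1/real b) *\<^sub>R sum_list (map u S))) \<le> sqrt (V / real b)"
proof -
  let ?V = "\<lambda>S. sum_list (map u S)"
  define X where "X = (\<lambda>S. norm ((1/real b) *\<^sub>R ?V S))"
  define P where "P = real N ^ b"
  have P: "P > 0" and N': "real N > 0" and b': "real b > 0" using N b by (simp_all add: P_def)
  have "real N * (\<Sum>S\<in>samples N b. (norm (?V S))^2) \<le> real b * P * (real N * V)"
    using sum_samples_norm_sum_list_squared[OF centred, of b] variance b' P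
    by (simp add: P_def mult_left_mono)
  hence sum_sq: "(\<Sum>S\<in>samples N b. (norm (?V S))^2) \<le> real b * P * V"
    using N' by (simp add: algebra_simps)
  have "(\<Sum>S\<in>samples N b. X S)^2 \<le> (\<Sum>S\<in>samples N b. (X S)^2) * real (card (samples N b))"
    by (rule sum_squared_le_sum_of_squares)
  also have "\<dots> = (\<Sum>S\<in>samples N b. (norm (?V S))^2) / (real b)^2 * P"
    by (simp add: X_def power_divide power_mult_distrib sum_divide_distrib card_samples P_def)
  also have "\<dots> \<le> (real b * P * V) / (real b)^2 * P"
    using sum_sq P by (intro mult_right_mono divide_right_mono) auto
  also have "\<dots> = P^2 * (V / real b)" using b' by (simp add: power2_eq_square field_simps)
  finally have "(sample_exp N b X)^2 \<le> V / real b"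
    using P by (simp add: sample_exp_def P_def[symmetric] power_divide field_simps)
  hence "sample_exp N b X \<le> sqrt (V / real b)" by (rule real_le_rsqrt)
  thus ?thesis by (simp add: X_def)
qed

section \<open>Subsampled Newton-CG\<close>

lemma mnorm_le_if_loewner_bounds:
  fixes A :: "real^'n^'n"
  assumes "symm A" "loewner_le (m *\<^sub>R mat 1) A" "loewner_le A (l *\<^sub>R mat 1)" "0 \<le> m"
  shows "mnorm A \<le> l"
  unfolding mnorm_def
proof (rule onorm_le)
  fix x
  show "norm (A *v x) \<le> l * norm x"
  proof (rule psd_norm_matrix_vector_mult_le[OF assms(1)])
    show "0 \<le> y \<bullet> (A *v y)" for y
      by (rule order_trans[OF mult_nonneg_nonneg[OF assms(4) inner_ge_zero]
            loewner_le_scaled_id_left[OF assms(2)]])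
  qed (rule loewner_le_scaled_id_right[OF assms(3)])
qed

lemma newton_cg_step_error:
  fixes A :: "real^'n^'n" and G :: "real^'n \<Rightarrow> real^'n"
  assumes G': "\<And>v. (G has_derivative (\<lambda>h. H v *v h)) (at v)"
    and lipschitz: "\<And>v z. mnorm (H v - H z) \<le> M * norm (v - z)"
    and bounded: "\<And>v. mnorm (H v) \<le> L"
    and root: "G w' = 0"
    and sym: "symm A" and A_bounds: "loewner_le (m *\<^sub>R mat 1) A" "loewner_le A (l *\<^sub>R mat 1)"
    and m: "0 < m" "m \<le> l"
  shows "norm (w + cg A (- G w) r - w')
    \<le> norm ((A - H w) *v (w - w')) / m + (M / (2 * m) * (norm (w - w'))^2
      + 2 * L / m * sqrt (l/m) * ((sqrt (l/m) - 1) / (sqrt (l/m) + 1))^r * norm (w - w'))"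
proof -
  note lower = loewner_le_scaled_id_left[OF A_bounds(1)]
  note upper = loewner_le_scaled_id_right[OF A_bounds(2)]
  define e where "e = w - w'"
  define \<kappa> where "\<kappa> = 2 * sqrt (l/m) * ((sqrt (l/m) - 1) / (sqrt (l/m) + 1))^r"
  have \<kappa>: "0 \<le> \<kappa>" using m by (simp add: \<kappa>_def)
  obtain p where p: "A *v p = - G w" using coercive_matrix_surj[OF lower m(1)] by blast
  have "norm (G w) \<le> L * norm e"
    using differentiable_bound[of UNIV G "\<lambda>v h. H v *v h" L w w'] G' bounded root
    by (simp add: e_def has_derivative_at_withinI mnorm_def)
  hence "m * norm p \<le> L * norm e"
    using coercive_matrix_vector_mult_ge[OF lower m(1), of p] p by simp
  hence p_le: "\<kappa> * norm p \<le> \<kappa> * (L * norm e / m)"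
    using m(1) \<kappa> by (intro mult_left_mono) (simp_all add: field_simps)
  have "m * norm (e + p) \<le> norm (A *v (e + p))"
    by (rule coercive_matrix_vector_mult_ge[OF lower m(1)])
  also have "A *v (e + p) = (A - H w) *v e - (G w - G w' - H w *v e)"
    using p root by (simp add: matrix_vector_right_distrib matrix_vector_mult_diff_rdistrib)
  also have "norm \<dots> \<le> norm ((A - H w) *v e) + M/2 * (norm e)^2"
    using norm_triangle_ineq4[of "(A - H w) *v e" "G w - G w' - H w *v e"]
      taylor_remainder_le[OF G' lipschitz, of w w']
    unfolding e_def by linarith
  finally have newton: "norm (e + p) \<le> norm ((A - H w) *v e) / m + M / (2 * m) * (norm e)^2"
    using m(1) by (simp add: field_simps)
  have "w + cg A (- G w) r - w' = (e + p) + (cg A (A *v p) r - p)"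
    using p by (simp add: e_def)
  hence "norm (w + cg A (- G w) r - w') \<le> norm (e + p) + norm (cg A (A *v p) r - p)"
    by (metis norm_triangle_ineq)
  also have "norm (cg A (A *v p) r - p) \<le> \<kappa> * norm p"
    unfolding \<kappa>_def by (rule cg_error_bound[OF sym lower upper m])
  finally show ?thesis using newton p_le by (simp add: e_def \<kappa>_def field_simps)
qed

lemma symm_sub_hess: "(\<And>i. i \<in> set S \<Longrightarrow> symm (H i w)) \<Longrightarrow> symm (sub_hess H S w)"
  unfolding sub_hess_def by (intro symm_scaleR symm_sum_list)

lemma sub_hess_minus_average:
  fixes H :: "nat \<Rightarrow> real^'n \<Rightarrow> real^'n^'n"
  assumes "length S = \<beta>" "\<beta> \<ge> 1"
  shows "(sub_hess H S w - Hbar) *v e = (1 / real \<beta>) *\<^sub>R sum_list (map (\<lambda>i. (H i w - Hbar) *v e) S)"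
proof -
  have "Hbar = (1 / real \<beta>) *\<^sub>R sum_list (map (\<lambda>i. Hbar) S)"
    using assms by (simp add: sum_list_map_const_scaleR)
  hence "sub_hess H S w - Hbar
      = (1 / real \<beta>) *\<^sub>R (sum_list (map (\<lambda>i. H i w) S) - sum_list (map (\<lambda>i. Hbar) S))"
    unfolding sub_hess_def assms(1) by (simp add: scaleR_right_diff_distrib)
  hence "sub_hess H S w - Hbar = (1 / real \<beta>) *\<^sub>R sum_list (map (\<lambda>i. H i w - Hbar) S)"
    by (simp only: sum_list_subtractf)
  thus ?thesis by (simp add: scaleR_matrix_vector_assoc[symmetric] matrix_vector_mult_sum_list)
qed

lemma sample_exp_sub_hess_deviation_le:
  fixes H :: "nat \<Rightarrow> real^'n \<Rightarrow> real^'n^'n" and N \<beta> :: nat and w e :: "real^'n"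
  defines "Hbar \<equiv> (1 / real N) *\<^sub>R (\<Sum>i<N. H i w)"
  assumes N: "N \<ge> 1" and \<beta>: "\<beta> \<ge> 1" and sym: "\<And>i. i < N \<Longrightarrow> symm (H i w)" and \<sigma>: "0 \<le> \<sigma>"
    and variance: "mnorm ((1 / real N) *\<^sub>R (\<Sum>i<N. (H i w - Hbar) ** (H i w - Hbar))) \<le> \<sigma>^2"
  shows "sample_exp N \<beta> (\<lambda>S. norm ((sub_hess H S w - Hbar) *v e)) \<le> \<sigma> * norm e / sqrt (real \<beta>)"
proof -
  define u where "u = (\<lambda>i. (H i w - Hbar) *v e)"
  define V where "V = (1 / real N) *\<^sub>R (\<Sum>i<N. (H i w - Hbar) ** (H i w - Hbar))"
  have N': "real N > 0" using N by simp
  have "(\<Sum>i<N. u i) = (\<Sum>i<N. H i w *v e) - real N *\<^sub>R (Hbar *v e)"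
    by (simp add: u_def matrix_vector_mult_diff_rdistrib sum_subtractf sum_constant_scaleR
        del: sum_constant)
  also have "(\<Sum>i<N. H i w *v e) = real N *\<^sub>R (Hbar *v e)"
    using N' by (simp add: Hbar_def matrix_vector_mult_sum scaleR_matrix_vector_assoc[symmetric])
  finally have centred: "(\<Sum>i<N. u i) = 0" by simp
  have symHbar: "symm Hbar" unfolding Hbar_def by (intro symm_scaleR symm_sum sym) simp
  have "(norm (u i))^2 = e \<bullet> (((H i w - Hbar) ** (H i w - Hbar)) *v e)" if "i < N" for i
    using symm_diff[OF sym[OF that] symHbar]
    by (simp add: u_def power2_norm_eq_inner symm_def matrix_vector_mul_assoc[symmetric])
  hence "(\<Sum>i<N. (norm (u i))^2) = real N * (e \<bullet> (V *v e))"
    using N' by (simp add: V_def inner_sum_right matrix_vector_mult_sum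
        scaleR_matrix_vector_assoc[symmetric])
  also have "e \<bullet> (V *v e) \<le> norm e * norm (V *v e)" by (rule norm_cauchy_schwarz)
  also have "\<dots> \<le> norm e * (mnorm V * norm e)" by (intro mult_left_mono mnorm_bound) simp
  also have "\<dots> \<le> norm e * (\<sigma>^2 * norm e)"
    using variance[folded V_def] by (intro mult_left_mono mult_right_mono) simp_all
  finally have "(\<Sum>i<N. (norm (u i))^2) \<le> real N * (\<sigma>^2 * (norm e)^2)"
    using N' by (simp add: power2_eq_square mult_ac)
  from sample_exp_norm_mean_le[OF centred N \<beta> this]
  have "sample_exp N \<beta> (\<lambda>S. norm ((1/real \<beta>) *\<^sub>R sum_list (map u S))) \<le> \<sigma> * norm e / sqrt (real \<beta>)"
    using \<sigma> by (simp add: real_sqrt_divide real_sqrt_mult)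
  moreover have "(sub_hess H S w - Hbar) *v e = (1/real \<beta>) *\<^sub>R sum_list (map u S)"
    if "S \<in> samples N \<beta>" for S
    using that \<beta> unfolding u_def by (intro sub_hess_minus_average) (simp_all add: samples_def)
  then have "sample_exp N \<beta> (\<lambda>S. norm ((sub_hess H S w - Hbar) *v e))
      = sample_exp N \<beta> (\<lambda>S. norm ((1/real \<beta>) *\<^sub>R sum_list (map u S)))"
    unfolding sample_exp_def by (intro arg_cong2[where f="(/)"] sum.cong) simp_all
  ultimately show ?thesis by simp
qed

lemma has_derivative_average:
  assumes "\<And>i. i < N \<Longrightarrow> (f i has_derivative f' i) (at v)"
  shows "((\<lambda>v. (1 / real N) *\<^sub>R (\<Sum>i<N. f i v))
    has_derivative (\<lambda>h. (1 / real N) *\<^sub>R (\<Sum>i<N. f' i h))) (at v)"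
  using assms by (intro has_derivative_scaleR_right has_derivative_sum) auto

lemma finite_average_derivatives:
  fixes F :: "nat \<Rightarrow> real^'n \<Rightarrow> real"
  assumes F': "\<And>i v. i < N \<Longrightarrow> (F i has_derivative (\<lambda>h. g i v \<bullet> h)) (at v)"
    and g': "\<And>i v. i < N \<Longrightarrow> (g i has_derivative (\<lambda>h. H i v *v h)) (at v)"
  shows "((\<lambda>v. (1 / real N) * (\<Sum>i<N. F i v))
      has_derivative (\<lambda>h. ((1 / real N) *\<^sub>R (\<Sum>i<N. g i v)) \<bullet> h)) (at v)"
    and "((\<lambda>v. (1 / real N) *\<^sub>R (\<Sum>i<N. g i v))
      has_derivative (\<lambda>h. ((1 / real N) *\<^sub>R (\<Sum>i<N. H i v)) *v h)) (at v)"
proof -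
  show "((\<lambda>v. (1 / real N) * (\<Sum>i<N. F i v))
      has_derivative (\<lambda>h. ((1 / real N) *\<^sub>R (\<Sum>i<N. g i v)) \<bullet> h)) (at v)"
    using has_derivative_average[of N F "\<lambda>i h. g i v \<bullet> h" v] F' by (simp add: inner_sum_left)
  show "((\<lambda>v. (1 / real N) *\<^sub>R (\<Sum>i<N. g i v))
      has_derivative (\<lambda>h. ((1 / real N) *\<^sub>R (\<Sum>i<N. H i v)) *v h)) (at v)"
    by (rule has_derivative_eq_rhs[OF has_derivative_average[OF g']])
      (auto simp: matrix_vector_mult_sum scaleR_matrix_vector_assoc[symmetric])
qed

theorem lemma3p1:
  fixes F :: "nat \<Rightarrow> real^'n \<Rightarrow> real"
    and g :: "nat \<Rightarrow> real^'n \<Rightarrow> real^'n"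
    and H :: "nat \<Rightarrow> real^'n \<Rightarrow> real^'n^'n"
    and N \<beta> r :: nat
    and \<mu> L \<mu>\<beta> L\<beta> M \<sigma> :: real
    and wstar w :: "real^'n"
  defines "R \<equiv> (\<lambda>v. (1 / real N) * (\<Sum>i<N. F i v))"
      and "gradR \<equiv> (\<lambda>v. (1 / real N) *\<^sub>R (\<Sum>i<N. g i v))"
      and "hessR \<equiv> (\<lambda>v. (1 / real N) *\<^sub>R (\<Sum>i<N. H i v))"
  assumes N_pos: "N \<ge> 1"
    and C2_F: "\<And>i v. i < N \<Longrightarrow> (F i has_derivative (\<lambda>h. g i v \<bullet> h)) (at v)"
    and C2_g: "\<And>i v. i < N \<Longrightarrow> (g i has_derivative (\<lambda>h. H i v *v h)) (at v)"
    and C2_H: "\<And>i. i < N \<Longrightarrow> continuous_on UNIV (H i)"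
    and A1_uniform: "\<exists>\<mu>bar Lbar. 0 < \<mu>bar \<and>
        (\<forall>b>0. \<exists>m l. \<mu>bar \<le> m \<and> m \<le> l \<and> l \<le> Lbar \<and>
           (\<forall>S\<in>samples N b. \<forall>v. loewner_le (m *\<^sub>R mat 1) (sub_hess H S v)
                                  \<and> loewner_le (sub_hess H S v) (l *\<^sub>R mat 1)))"
    and A1_beta_pos: "0 < \<mu>\<beta>" "\<mu>\<beta> \<le> L\<beta>"
    and A1_beta: "\<And>S v. S \<in> samples N \<beta> \<Longrightarrow>
        loewner_le (\<mu>\<beta> *\<^sub>R mat 1) (sub_hess H S v) \<and> loewner_le (sub_hess H S v) (L\<beta> *\<^sub>R mat 1)"
    and A1_R: "0 < \<mu>" "\<mu> \<le> L"
      "\<And>v. loewner_le (\<mu> *\<^sub>R mat 1) (hessR v) \<and> loewner_le (hessR v) (L *\<^sub>R mat 1)"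
    and A3: "\<And>v z. mnorm (hessR v - hessR z) \<le> M * norm (v - z)"
    and A4: "\<sigma> \<ge> 0"
      "\<And>v. mnorm ((1 / real N) *\<^sub>R (\<Sum>i<N. (H i v - hessR v) ** (H i v - hessR v))) \<le> \<sigma>\<^sup>2"
    and wstar_min: "\<And>v. R wstar \<le> R v"
    and wstar_unique: "\<And>u. (\<forall>v. R u \<le> R v) \<Longrightarrow> u = wstar"
    and beta_pos: "\<beta> \<ge> 1"
    and r_lt_d: "r < CARD('n)"
  shows "let \<delta> = L\<beta> / \<mu>\<beta>;
             \<theta> = (sqrt \<delta> - 1) / (sqrt \<delta> + 1);
             C1 = M / (2 * \<mu>\<beta>);
             C2 = \<sigma> / \<mu>\<beta>;
             C3 = 2 * L / \<mu>\<beta> * sqrt \<delta>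
         in sample_exp N \<beta> (\<lambda>S. norm (w + cg (sub_hess H S w) (- gradR w) r - wstar))
            \<le> C1 * (norm (w - wstar))\<^sup>2 + (C2 / sqrt (real \<beta>) + C3 * \<theta> ^ r) * norm (w - wstar)"
proof -
  have symH: "symm (H i v)" if "i < N" for i v
    using hessian_symmetric[OF C2_F C2_g C2_H] that by blast
  have symHR: "symm (hessR v)" for v
    unfolding hessR_def by (intro symm_scaleR symm_sum symH) simp
  have R': "(R has_derivative (\<lambda>h. gradR v \<bullet> h)) (at v)" for v
    unfolding R_def gradR_def by (rule finite_average_derivatives(1)[OF C2_F C2_g])
  have gradR': "(gradR has_derivative (\<lambda>h. hessR v *v h)) (at v)" for v
    unfolding gradR_def hessR_def by (rule finite_average_derivatives(2)[OF C2_F C2_g])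
  have "(\<lambda>h. gradR wstar \<bullet> h) = (\<lambda>h. 0)"
    by (rule has_derivative_local_min[OF R']) (simp add: wstar_min)
  hence root: "gradR wstar = 0" by (metis inner_eq_zero_iff)
  have hessR_bound: "mnorm (hessR v) \<le> L" for v
    using A1_R mnorm_le_if_loewner_bounds[OF symHR] by (meson less_imp_le)
  define e where "e = w - wstar"
  define K where "K = M / (2 * \<mu>\<beta>) * (norm e)^2
    + 2 * L / \<mu>\<beta> * sqrt (L\<beta>/\<mu>\<beta>) * ((sqrt (L\<beta>/\<mu>\<beta>) - 1) / (sqrt (L\<beta>/\<mu>\<beta>) + 1))^r * norm e"
  have deviation: "sample_exp N \<beta> (\<lambda>S. norm ((sub_hess H S w - hessR w) *v e))
      \<le> \<sigma> * norm e / sqrt (real \<beta>)"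
    unfolding hessR_def
    by (rule sample_exp_sub_hess_deviation_le[OF N_pos beta_pos _ A4(1) A4(2)[unfolded hessR_def]])
      (rule symH)
  have "sample_exp N \<beta> (\<lambda>S. norm (w + cg (sub_hess H S w) (- gradR w) r - wstar))
      \<le> sample_exp N \<beta> (\<lambda>S. (1/\<mu>\<beta>) * norm ((sub_hess H S w - hessR w) *v e) + K)"
  proof (rule sample_exp_mono)
    fix S assume S: "S \<in> samples N \<beta>"
    then have "symm (sub_hess H S w)" by (intro symm_sub_hess symH) (auto simp: samples_def)
    from newton_cg_step_error[OF gradR' A3 hessR_bound root this A1_beta[OF S, THEN conjunct1]
        A1_beta[OF S, THEN conjunct2] A1_beta_pos]
    show "norm (w + cg (sub_hess H S w) (- gradR w) r - wstar)
      \<le> (1/\<mu>\<beta>) * norm ((sub_hess H S w - hessR w) *v e) + K"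
      by (simp add: K_def e_def)
  qed
  also have "\<dots> = (1/\<mu>\<beta>) * sample_exp N \<beta> (\<lambda>S. norm ((sub_hess H S w - hessR w) *v e)) + K"
    by (rule sample_exp_affine[OF N_pos])
  also have "\<dots> \<le> (1/\<mu>\<beta>) * (\<sigma> * norm e / sqrt (real \<beta>)) + K"
    using deviation A1_beta_pos(1) by (intro add_right_mono mult_left_mono) auto
  finally show ?thesis by (simp add: Let_def K_def e_def algebra_simps)
qed

end
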